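(* Let $M\cong\prec a_1,\ldots,a_m\succ$ and $N\cong\prec b_1,\ldots,b_n\succ$ be integral lattices relative to good BONGs with $m\ge n$, and let $j\in[1,\min\{m-1,n\}]^E$. If $R_j=-2e$ and $R_{j+1}=0$, then $d[a_{1,j}b_{1,j}]\ge A_j$.
   Context: $F$ dyadic local field, $\mathcal O_F$, valuation $\operatorname{ord}$, $e=\operatorname{ord}(2)$, $d(c)=\operatorname{ord}(c^{-1}\mathfrak d(c))$ with quadratic defect $\mathfrak d(c)=\bigcap_{x\in F}(c-x^2)\mathcal O_F$. Integral: $Q(M)\subseteq\mathcal O_F$. BONGs: $x_1,\ldots,x_m\in FM$ is a BONG of $M$ if $x_1\in M$ with $Q(x_1)\mathcal O_F=\mathfrak nM$ and $x_2,\ldots,x_m$ is a BONG of the projection of $M$ onto $(Fx_1)^\perp$; good if $\operatorname{ord}Q(x_i)\le\operatorname{ord}Q(x_{i+2})$; $M\cong\prec a_1,\ldots,a_m\succ$ means $Q(x_i)=a_i$. $R_i=\operatorname{ord}(a_i)$, $S_i=\operatorname{ord}(b_i)$. $a_{i,j}=a_i\cdots a_j$, $a_{i,i-1}=1$, similarly $b_{i,j}$. $[h,k]^E$ is the set of even integers in $[h,k]$. For $1\le i\le m-1$, $\alpha_i=\min\{T_0,\ldots,T_{m-1}\}$ with $T_0=(R_{i+1}-R_i)/2+e$, $T_j=R_{i+1}-R_j+d(-a_ja_{j+1})$ ($1\le j\le i$), $T_j=R_{j+1}-R_i+d(-a_ja_{j+1})$ ($i\le j\le m-1$); $\beta_i$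 is defined likewise from $N$. For $c\in F^\times$, $0\le i\le m$, $0\le j\le n$: $d[ca_{1,i}b_{1,j}]=\min\{d(ca_{1,i}b_{1,j}),\alpha_i,\beta_j\}$, where $\alpha_i$ is omitted if $i\in\{0,m\}$ and $\beta_j$ omitted if $j\in\{0,n\}$. For $1\le i\le\min\{m-1,n\}$, $A_i=\min\{(R_{i+1}-S_i)/2+e,\ R_{i+1}-S_i+d[-a_{1,i+1}b_{1,i-1}],\ R_{i+1}+R_{i+2}-S_{i-1}-S_i+d[a_{1,i+2}b_{1,i-2}]\}$, the third term omitted if $i=1$ or $i=m-1$. *)

theory Defs
  imports "HOL-Library.Extended_Real"
begin

text \<open>A field F with a normalized discrete valuation ord (only meaningful on nonzero
elements; ord 0 is irrelevant and stands for infinity).\<close>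

definition valring :: "('a::field \<Rightarrow> int) \<Rightarrow> 'a set" where
  "valring ord = {x. x = 0 \<or> 0 \<le> ord x}"

definition dyadic_local_field :: "('a::field \<Rightarrow> int) \<Rightarrow> bool" where
  "dyadic_local_field ord \<longleftrightarrow>
     (\<forall>x y. x \<noteq> 0 \<longrightarrow> y \<noteq> 0 \<longrightarrow> ord (x * y) = ord x + ord y) \<and>
     (\<forall>x y. x \<noteq> 0 \<longrightarrow> y \<noteq> 0 \<longrightarrow> x + y \<noteq> 0 \<longrightarrow> min (ord x) (ord y) \<le> ord (x + y)) \<and>
     (\<exists>p. p \<noteq> 0 \<and> ord p = 1) \<and>
     (\<exists>S. finite S \<and> S \<subseteq> valring ord \<and>
          (\<forall>x\<in>valring ord. \<exists>s\<in>S. x = s \<or> 1 \<le> ord (x - s))) \<and>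
     (2::'a) \<noteq> 0 \<and> 0 < ord 2 \<and>
     (\<forall>s::nat \<Rightarrow> 'a.
        (\<forall>K. \<exists>N. \<forall>p\<ge>N. \<forall>q\<ge>N. s p = s q \<or> K \<le> ord (s p - s q)) \<longrightarrow>
        (\<exists>l. \<forall>K. \<exists>N. \<forall>p\<ge>N. s p = l \<or> K \<le> ord (s p - l)))"

definition qdefect :: "('a::field \<Rightarrow> int) \<Rightarrow> 'a \<Rightarrow> 'a set" where
  "qdefect ord c = (\<Inter>x. {(c - x^2) * y | y. y \<in> valring ord})"

definition ordI :: "('a::field \<Rightarrow> int) \<Rightarrow> 'a set \<Rightarrow> ereal" where
  "ordI ord I = (INF z \<in> I - {0}. ereal (real_of_int (ord z)))"

definition qd :: "('a::field \<Rightarrow> int) \<Rightarrow> 'a \<Rightarrow> ereal" where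
  "qd ord c = ordI ord (qdefect ord c) - ereal (real_of_int (ord c))"

text \<open>The quadratic space is F^k (vectors nat => F vanishing from index k on) with the
symmetric bilinear form given by a Gram matrix G; Q(x) = B(x,x).\<close>

definition vsp :: "nat \<Rightarrow> (nat \<Rightarrow> 'a::zero) set" where
  "vsp k = {x. \<forall>i\<ge>k. x i = 0}"

definition bil :: "(nat \<Rightarrow> nat \<Rightarrow> 'a::field) \<Rightarrow> nat \<Rightarrow> (nat \<Rightarrow> 'a) \<Rightarrow> (nat \<Rightarrow> 'a) \<Rightarrow> 'a" where
  "bil G k x y = (\<Sum>i<k. \<Sum>j<k. x i * G i j * y j)"

definition qf :: "(nat \<Rightarrow> nat \<Rightarrow> 'a::field) \<Rightarrow> nat \<Rightarrow> (nat \<Rightarrow> 'a) \<Rightarrow> 'a" where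
  "qf G k x = bil G k x x"

definition lin_indep :: "nat \<Rightarrow> (nat \<Rightarrow> nat \<Rightarrow> 'a::field) \<Rightarrow> bool" where
  "lin_indep r e \<longleftrightarrow> (\<forall>c. (\<forall>t. (\<Sum>i<r. c i * e i t) = 0) \<longrightarrow> (\<forall>i<r. c i = 0))"

definition is_lattice :: "('a::field \<Rightarrow> int) \<Rightarrow> nat \<Rightarrow> (nat \<Rightarrow> 'a) set \<Rightarrow> bool" where
  "is_lattice ord k L \<longleftrightarrow> (\<exists>r e. (\<forall>i<r. e i \<in> vsp k) \<and> lin_indep r e \<and>
      L = {(\<lambda>t. \<Sum>i<r. c i * e i t) | c. \<forall>i<r. c i \<in> valring ord})"

definition integral_lattice :: "('a::field \<Rightarrow> int) \<Rightarrow> (nat \<Rightarrow> nat \<Rightarrow> 'a) \<Rightarrow> nat \<Rightarrow> (nat \<Rightarrow> 'a) set \<Rightarrow> bool" where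
  "integral_lattice ord G k L \<longleftrightarrow> (\<forall>x\<in>L. qf G k x \<in> valring ord)"

definition normideal :: "('a::field \<Rightarrow> int) \<Rightarrow> (nat \<Rightarrow> nat \<Rightarrow> 'a) \<Rightarrow> nat \<Rightarrow> (nat \<Rightarrow> 'a) set \<Rightarrow> 'a set" where
  "normideal ord G k L = {(\<Sum>i<r. c i * qf G k (v i)) | (r::nat) c v. \<forall>i<r. c i \<in> valring ord \<and> v i \<in> L}"

definition proj :: "(nat \<Rightarrow> nat \<Rightarrow> 'a::field) \<Rightarrow> nat \<Rightarrow> (nat \<Rightarrow> 'a) \<Rightarrow> (nat \<Rightarrow> 'a) \<Rightarrow> (nat \<Rightarrow> 'a)" where
  "proj G k x y = (\<lambda>t. y t - (bil G k y x / qf G k x) * x t)"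

fun is_BONG :: "('a::field \<Rightarrow> int) \<Rightarrow> (nat \<Rightarrow> nat \<Rightarrow> 'a) \<Rightarrow> nat \<Rightarrow> (nat \<Rightarrow> 'a) set \<Rightarrow> (nat \<Rightarrow> 'a) list \<Rightarrow> bool" where
  "is_BONG ord G k L [] \<longleftrightarrow> L = {(\<lambda>_. 0)}"
| "is_BONG ord G k L (x # xs) \<longleftrightarrow>
     x \<in> L \<and> qf G k x \<noteq> 0 \<and>
     {c * qf G k x | c. c \<in> valring ord} = normideal ord G k L \<and>
     is_BONG ord G k (proj G k x ` L) xs"

definition good_BONG_lattice :: "('a::field \<Rightarrow> int) \<Rightarrow> (nat \<Rightarrow> nat \<Rightarrow> 'a) \<Rightarrow> nat \<Rightarrow> (nat \<Rightarrow> 'a) set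
    \<Rightarrow> (nat \<Rightarrow> 'a) \<Rightarrow> nat \<Rightarrow> bool" where
  "good_BONG_lattice ord G k L a m \<longleftrightarrow> is_lattice ord k L \<and>
     (\<exists>xs. is_BONG ord G k L xs \<and> length xs = m \<and>
        (\<forall>i. 1 \<le> i \<longrightarrow> i \<le> m \<longrightarrow> qf G k (xs ! (i - 1)) = a i) \<and>
        (\<forall>i. 1 \<le> i \<longrightarrow> i + 2 \<le> m \<longrightarrow> ord (a i) \<le> ord (a (i + 2))))"

text \<open>a_{i,j} = a_i ... a_j (empty product 1).\<close>
definition prodr :: "(nat \<Rightarrow> 'a::field) \<Rightarrow> nat \<Rightarrow> nat \<Rightarrow> 'a" where
  "prodr a i j = (\<Prod>k\<in>{i..j}. a k)"

definition alpha :: "('a::field \<Rightarrow> int) \<Rightarrow> (nat \<Rightarrow> 'a) \<Rightarrow> nat \<Rightarrow> nat \<Rightarrow> ereal" where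
  "alpha ord a m i = Min
     ({ereal ((real_of_int (ord (a (i+1))) - real_of_int (ord (a i))) / 2 + real_of_int (ord 2))}
      \<union> {ereal (real_of_int (ord (a (i+1)) - ord (a j))) + qd ord (- (a j * a (j+1))) | j. 1 \<le> j \<and> j \<le> i}
      \<union> {ereal (real_of_int (ord (a (j+1)) - ord (a i))) + qd ord (- (a j * a (j+1))) | j. i \<le> j \<and> j \<le> m - 1})"

definition dbr :: "('a::field \<Rightarrow> int) \<Rightarrow> (nat \<Rightarrow> 'a) \<Rightarrow> nat \<Rightarrow> (nat \<Rightarrow> 'a) \<Rightarrow> nat \<Rightarrow> 'a \<Rightarrow> nat \<Rightarrow> nat \<Rightarrow> ereal" where
  "dbr ord a m b n c i j = min (qd ord (c * prodr a 1 i * prodr b 1 j))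
      (min (if i = 0 \<or> i = m then \<infinity> else alpha ord a m i)
           (if j = 0 \<or> j = n then \<infinity> else alpha ord b n j))"

definition Acoef :: "('a::field \<Rightarrow> int) \<Rightarrow> (nat \<Rightarrow> 'a) \<Rightarrow> nat \<Rightarrow> (nat \<Rightarrow> 'a) \<Rightarrow> nat \<Rightarrow> nat \<Rightarrow> ereal" where
  "Acoef ord a m b n i = min
     (ereal (real_of_int (ord (a (i+1)) - ord (b i)) / 2 + real_of_int (ord 2)))
     (min (ereal (real_of_int (ord (a (i+1)) - ord (b i))) + dbr ord a m b n (-1) (i+1) (i-1))
          (if i = 1 \<or> i = m - 1 then \<infinity>
           else ereal (real_of_int (ord (a (i+1)) + ord (a (i+2)) - ord (b (i-1)) - ord (b i)))
                + dbr ord a m b n 1 (i+2) (i-2)))"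

end

theory Submission
  imports Defs
begin

text \<open>Write \<open>e = ord 2\<close> and \<open>D = A\<^sub>j\<close>. A good BONG satisfies \<open>R\<^sub>i\<^sub>+\<^sub>1 \<ge> R\<^sub>i - 2e\<close>,
  \<open>d(-a\<^sub>ia\<^sub>i\<^sub>+\<^sub>1) \<ge> R\<^sub>i - R\<^sub>i\<^sub>+\<^sub>1\<close> and \<open>R\<^sub>i \<le> R\<^sub>i\<^sub>+\<^sub>2\<close>; with integrality this gives \<open>R\<^sub>t, S\<^sub>t \<ge> 0\<close>
  for odd \<open>t\<close>, \<open>R\<^sub>t \<le> R\<^sub>j = -2e\<close> for even \<open>t \<le> j\<close>, and \<open>S\<^sub>j \<ge> -2e\<close>. Hence \<open>D \<le> 2e\<close> and
  \<open>D \<le> \<beta>\<^sub>j\<^sub>-\<^sub>1 - S\<^sub>j\<close>. Termwise, \<open>\<alpha>\<^sub>j \<ge> 2e\<close> and \<open>\<beta>\<^sub>j \<ge> \<beta>\<^sub>j\<^sub>-\<^sub>1 - S\<^sub>j\<close>. Finally \<open>a\<^sub>1\<^sub>,\<^sub>jb\<^sub>1\<^sub>,\<^sub>j\<close> is the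
  product of the factors \<open>(-a\<^sub>ta\<^sub>t\<^sub>+\<^sub>1)(-b\<^sub>tb\<^sub>t\<^sub>+\<^sub>1)\<close>, \<open>t\<close> odd, each of defect \<open>\<ge> D\<close>, and
  \<open>d(xy) \<ge> min(d(x), d(y))\<close>.\<close>

section \<open>Bilinear forms and projections\<close>

lemma bil_linear_left:
  "bil G k (\<lambda>t. c * u t + d * v t) w = c * bil G k u w + d * bil G k v w"
  unfolding bil_def by (simp add: algebra_simps sum.distrib sum_distrib_left)

lemma bil_linear_right:
  "bil G k w (\<lambda>t. c * u t + d * v t) = c * bil G k w u + d * bil G k w v"
  unfolding bil_def by (simp add: algebra_simps sum.distrib sum_distrib_left)

lemma bil_commute:
  assumes "\<forall>i i'. G i i' = G i' i"
  shows "bil G k u v = bil G k v u"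
  unfolding bil_def using assms by (subst sum.swap) (simp add: algebra_simps)

lemma qf_add:
  assumes "\<forall>i i'. G i i' = G i' i"
  shows "qf G k (\<lambda>t. u t + v t) = qf G k u + qf G k v + 2 * bil G k u v"
  using bil_linear_left[of G k 1 u 1 v] bil_linear_right[of G k _ 1 u 1 v]
    bil_commute[OF assms, of k u v]
  unfolding qf_def by simp

lemma qf_proj:
  assumes "\<forall>i i'. G i i' = G i' i" and "qf G k x \<noteq> 0"
  shows "qf G k (proj G k x y) = qf G k y - (bil G k y x)^2 / qf G k x"
proof -
  define c where "c = bil G k y x / qf G k x"
  have proj_eq: "proj G k x y = (\<lambda>t. 1 * y t + (- c) * x t)"
    unfolding proj_def c_def by simp
  have "qf G k (proj G k x y) = qf G k y - c * bil G k x y - c * bil G k y x + c * c * qf G k x"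
    unfolding qf_def proj_eq bil_linear_left bil_linear_right by (simp add: algebra_simps)
  also have "\<dots> = qf G k y - (bil G k y x)^2 / qf G k x"
    using assms bil_commute[OF assms(1), of k x y]
    unfolding c_def by (simp add: field_simps power2_eq_square)
  finally show ?thesis .
qed

lemma proj_add: "proj G k x (\<lambda>t. u t + v t) = (\<lambda>t. proj G k x u t + proj G k x v t)"
  using bil_linear_left[of G k 1 u 1 v x]
  unfolding proj_def by (simp add: algebra_simps add_divide_distrib)

definition add_closed :: "(nat \<Rightarrow> 'a::plus) set \<Rightarrow> bool" where
  "add_closed L \<longleftrightarrow> (\<forall>u\<in>L. \<forall>v\<in>L. (\<lambda>t. u t + v t) \<in> L)"

lemma add_closed_proj_image: "add_closed L \<Longrightarrow> add_closed (proj G k x ` L)"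
  unfolding add_closed_def by (auto simp: proj_add[symmetric])

section \<open>Dyadic valuations and the quadratic defect\<close>

locale dyadic_valuation =
  fixes ord :: "'a::field \<Rightarrow> int"
  assumes ord_mult: "x \<noteq> 0 \<Longrightarrow> y \<noteq> 0 \<Longrightarrow> ord (x * y) = ord x + ord y"
    and ord_add: "x \<noteq> 0 \<Longrightarrow> y \<noteq> 0 \<Longrightarrow> x + y \<noteq> 0 \<Longrightarrow> min (ord x) (ord y) \<le> ord (x + y)"
    and uniformizer_exists: "\<exists>p. p \<noteq> 0 \<and> ord p = 1"
    and two_nonzero: "(2::'a) \<noteq> 0"
    and ord_two_pos: "0 < ord 2"

lemma dyadic_local_field_dyadic_valuation: "dyadic_local_field ord \<Longrightarrow> dyadic_valuation ord"
  unfolding dyadic_local_field_def by unfold_locales auto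

context dyadic_valuation
begin

lemma ord_one: "ord 1 = 0"
  using ord_mult[of 1 1] by simp

lemma ord_inverse: "x \<noteq> 0 \<Longrightarrow> ord (inverse x) = - ord x"
  using ord_mult[of x "inverse x"] ord_one by simp

lemma ord_divide: "x \<noteq> 0 \<Longrightarrow> y \<noteq> 0 \<Longrightarrow> ord (x / y) = ord x - ord y"
  by (simp add: divide_inverse ord_mult ord_inverse)

lemma ord_minus: "ord (- x) = ord x"
proof (cases "x = 0")
  case False
  have "ord (-1) = 0" using ord_mult[of "-1" "-1"] ord_one by simp
  with False show ?thesis using ord_mult[of "-1" x] by simp
qed simp

lemma ord_power: "x \<noteq> 0 \<Longrightarrow> ord (x ^ n) = int n * ord x"
  by (induction n) (auto simp: ord_one ord_mult algebra_simps)

text \<open>\<open>val_ge u L\<close> says \<open>u \<in> \<pi>\<^sup>L \<O>\<^sub>F\<close>; it avoids case splits on \<open>u = 0\<close>, where \<open>ord\<close> is junk.\<close>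

definition val_ge :: "'a \<Rightarrow> int \<Rightarrow> bool" where
  "val_ge u L \<longleftrightarrow> u = 0 \<or> L \<le> ord u"

lemma val_ge_ord: "val_ge u (ord u)"
  by (simp add: val_ge_def)

lemma val_ge_mono: "val_ge u L \<Longrightarrow> L' \<le> L \<Longrightarrow> val_ge u L'"
  by (auto simp: val_ge_def)

lemma val_ge_add: "val_ge u L \<Longrightarrow> val_ge v L \<Longrightarrow> val_ge (u + v) L"
  unfolding val_ge_def using ord_add[of u v]
  by (cases "u = 0"; cases "v = 0"; cases "u + v = 0"; auto)

lemma val_ge_diff: "val_ge u L \<Longrightarrow> val_ge v L \<Longrightarrow> val_ge (u - v) L"
  using val_ge_add[of u L "- v"] by (auto simp: val_ge_def ord_minus)

lemma val_ge_mult: "val_ge u L1 \<Longrightarrow> val_ge v L2 \<Longrightarrow> val_ge (u * v) (L1 + L2)"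
  unfolding val_ge_def by (cases "u = 0"; cases "v = 0"; auto simp: ord_mult)

lemma valring_iff_val_ge: "x \<in> valring ord \<longleftrightarrow> val_ge x 0"
  by (simp add: valring_def val_ge_def)

lemma qd_ge_ord_diff_square:
  assumes "x - w^2 \<noteq> 0"
  shows "ereal (real_of_int (ord (x - w^2) - ord x)) \<le> qd ord x"
proof -
  have "ereal (real_of_int (ord (x - w^2))) \<le> ordI ord (qdefect ord x)"
    unfolding ordI_def
  proof (rule INF_greatest)
    fix z assume "z \<in> qdefect ord x - {0}"
    then obtain y where "z = (x - w^2) * y" "y \<in> valring ord" "z \<noteq> 0"
      unfolding qdefect_def by blast
    with assms show "ereal (real_of_int (ord (x - w^2))) \<le> ereal (real_of_int (ord z))"
      by (simp add: ord_mult valring_def)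
  qed
  then show ?thesis
    unfolding qd_def by (cases "ordI ord (qdefect ord x)") auto
qed

lemma qd_square: "qd ord (w^2) = \<infinity>"
proof -
  have "z = 0" if "z \<in> qdefect ord (w^2)" for z
    using that unfolding qdefect_def by (auto dest: InterD[of _ _ "{(w^2 - w^2) * y |y. y \<in> valring ord}"])
  then have "qdefect ord (w^2) - {0} = {}"
    by blast
  then show ?thesis
    unfolding qd_def ordI_def by (simp only:) (simp add: top_ereal_def)
qed

lemma qd_nonneg: "0 \<le> qd ord x"
proof (cases "x = 0")
  case True
  then show ?thesis using qd_square[of 0] by simp
next
  case False
  then show ?thesis using qd_ge_ord_diff_square[of x 0] by (simp add: zero_ereal_def)
qed

lemma qd_gt_imp_close_square:
  assumes "x \<noteq> 0" "0 \<le> K" "ereal (real_of_int K) < qd ord x"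
  obtains w where "val_ge (x - w^2) (ord x + K + 1)"
proof -
  have "\<exists>w. val_ge (x - w^2) (ord x + K + 1)"
  proof (rule ccontr)
    assume far: "\<not> ?thesis"
    obtain p where p: "p \<noteq> 0" "ord p = 1" using uniformizer_exists by blast
    define z where "z = x * p ^ nat K"
    have z: "z \<noteq> 0" "ord z = ord x + K"
      using assms p by (simp_all add: z_def ord_mult ord_power)
    have "z \<in> qdefect ord x"
      unfolding qdefect_def
    proof (rule InterI, clarsimp)
      fix w
      from far have "\<not> val_ge (x - w^2) (ord x + K + 1)" by blast
      then have "x - w^2 \<noteq> 0" "ord (x - w^2) \<le> ord x + K"
        by (auto simp: val_ge_def)
      with z have "z = (x - w^2) * (z / (x - w^2)) \<and> z / (x - w^2) \<in> valring ord"
        by (simp add: valring_def ord_divide)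
      then show "\<exists>y. z = (x - w^2) * y \<and> y \<in> valring ord" by blast
    qed
    with z have "ordI ord (qdefect ord x) \<le> ereal (real_of_int (ord z))"
      unfolding ordI_def by (intro INF_lower) auto
    then have "qd ord x \<le> ereal (real_of_int K)"
      unfolding qd_def z(2) by (cases "ordI ord (qdefect ord x)") auto
    with assms(3) show False by simp
  qed
  with that show ?thesis by blast
qed

text \<open>If \<open>x \<equiv> w\<^sub>1\<^sup>2\<close> and \<open>y \<equiv> w\<^sub>2\<^sup>2\<close> to relative precision \<open>K + 1\<close>, then
  \<open>xy - (w\<^sub>1w\<^sub>2)\<^sup>2 = x(y - w\<^sub>2\<^sup>2) + w\<^sub>2\<^sup>2(x - w\<^sub>1\<^sup>2)\<close> shows \<open>xy \<equiv> (w\<^sub>1w\<^sub>2)\<^sup>2\<close> to the same precision.\<close>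

lemma qd_mult_ge:
  assumes "x \<noteq> 0" "y \<noteq> 0" "D \<le> qd ord x" "D \<le> qd ord y"
  shows "D \<le> qd ord (x * y)"
proof (rule ccontr)
  assume "\<not> D \<le> qd ord (x * y)"
  then have "ordI ord (qdefect ord (x * y)) < D + ereal (real_of_int (ord (x * y)))"
    unfolding qd_def by (cases "ordI ord (qdefect ord (x * y))"; cases D) auto
  then obtain z where z: "z \<in> qdefect ord (x * y)" "z \<noteq> 0"
    and z_small: "ereal (real_of_int (ord z)) < D + ereal (real_of_int (ord (x * y)))"
    unfolding ordI_def INF_less_iff by blast
  have z_mult: "\<exists>c. z = (x * y - W^2) * c \<and> c \<in> valring ord" for W
    using z(1) unfolding qdefect_def by blast
  define K where "K = ord z - ord (x * y)"
  obtain c0 where "z = x * y * c0" "c0 \<in> valring ord"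
    using z_mult[of 0] by auto
  with z assms have "0 \<le> K"
    by (auto simp: K_def ord_mult valring_def)
  moreover have K_lt: "ereal (real_of_int K) < D"
    using z_small unfolding K_def by (cases D) auto
  ultimately obtain w1 w2 where
    w1: "val_ge (x - w1^2) (ord x + K + 1)" and w2: "val_ge (y - w2^2) (ord y + K + 1)"
    using qd_gt_imp_close_square[OF assms(1)] qd_gt_imp_close_square[OF assms(2)] assms(3,4)
    by (metis order_less_le_trans)
  have "val_ge (w2^2) (ord y)"
    using val_ge_diff[OF val_ge_ord[of y] val_ge_mono[OF w2]] \<open>0 \<le> K\<close> by simp
  then have "val_ge (w2^2 * (x - w1^2)) (ord x + (ord y + K + 1))"
    by (rule val_ge_mono[OF val_ge_mult[OF _ w1]]) simp
  with val_ge_mult[OF val_ge_ord w2]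
  have "val_ge (x * (y - w2^2) + w2^2 * (x - w1^2)) (ord x + (ord y + K + 1))"
    by (rule val_ge_add)
  then have "val_ge (x * (y - w2^2) + w2^2 * (x - w1^2)) (ord (x * y) + K + 1)"
    using assms(1,2) by (simp add: ord_mult add.assoc)
  moreover have "x * (y - w2^2) + w2^2 * (x - w1^2) = x * y - (w1 * w2)^2"
    by (simp add: algebra_simps power2_eq_square)
  moreover obtain c where "z = (x * y - (w1 * w2)^2) * c" "c \<in> valring ord"
    using z_mult by blast
  ultimately have "ord (x * y) + K + 1 \<le> ord z"
    using z(2) by (auto simp: val_ge_def valring_def ord_mult)
  then show False unfolding K_def by simp
qed


section \<open>Norms of a good BONG\<close>

lemma qf_in_normideal: "y \<in> L \<Longrightarrow> qf G k y \<in> normideal ord G k L"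
  unfolding normideal_def
  by (rule CollectI, rule exI[of _ 1], rule exI[of _ "\<lambda>_. 1"], rule exI[of _ "\<lambda>_. y"])
    (simp add: valring_iff_val_ge val_ge_def ord_one)

lemma double_bil_in_normideal:
  assumes "\<forall>i i'. G i i' = G i' i" "add_closed L" "x \<in> L" "y \<in> L"
  shows "2 * bil G k y x \<in> normideal ord G k L"
proof -
  define c :: "nat \<Rightarrow> 'a" where "c i = (if i = 0 then 1 else -1)" for i
  define v :: "nat \<Rightarrow> nat \<Rightarrow> 'a" where "v i = (if i = 0 then (\<lambda>t. x t + y t) else if i = 1 then x else y)" for i
  have "2 * bil G k y x = (\<Sum>i<3. c i * qf G k (v i))"
    using qf_add[OF assms(1), of k x y] bil_commute[OF assms(1), of k x y]
    by (simp add: c_def v_def numeral_3_eq_3)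
  moreover have "\<forall>i<3. c i \<in> valring ord \<and> v i \<in> L"
    using assms(2-4) ord_minus[of 1]
    by (auto simp: c_def v_def add_closed_def valring_iff_val_ge val_ge_def ord_one)
  ultimately show ?thesis
    unfolding normideal_def by blast
qed

text \<open>Since \<open>x\<close> generates the norm ideal, write \<open>Q(y) = c\<^sub>1Q(x)\<close> and \<open>2B(y,x) = c\<^sub>2Q(x)\<close> with \<open>c\<^sub>1, c\<^sub>2\<close>
  integral. Then \<open>Q(x') = Q(x)(c\<^sub>1 - c\<^sub>2\<^sup>2/4)\<close> for the projection \<open>x'\<close> of \<open>y\<close>, and
  \<open>-Q(x)Q(x') = B(y,x)\<^sup>2 - c\<^sub>1Q(x)\<^sup>2\<close> is a square up to an element of order \<open>\<ge> 2 ord Q(x)\<close>.\<close>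

lemma proj_qf_bounds:
  assumes sym: "\<forall>i i'. G i i' = G i' i" and L: "add_closed L"
    and x: "x \<in> L" "qf G k x \<noteq> 0"
    and norm: "{c * qf G k x | c. c \<in> valring ord} = normideal ord G k L"
    and y: "y \<in> L" and proj_nz: "qf G k (proj G k x y) \<noteq> 0"
  shows "ord (qf G k x) - 2 * ord 2 \<le> ord (qf G k (proj G k x y))"
    and "ereal (real_of_int (ord (qf G k x) - ord (qf G k (proj G k x y))))
           \<le> qd ord (- (qf G k x * qf G k (proj G k x y)))"
proof -
  define a a' B where "a = qf G k x" and "a' = qf G k (proj G k x y)" and "B = bil G k y x"
  have a: "a \<noteq> 0" and a': "a' \<noteq> 0"
    using x proj_nz by (simp_all add: a_def a'_def)
  obtain c1 where c1: "qf G k y = c1 * a" "c1 \<in> valring ord"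
    using qf_in_normideal[of y L G k] y unfolding norm[symmetric] a_def by blast
  obtain c2 where c2: "2 * B = c2 * a" "c2 \<in> valring ord"
    using double_bil_in_normideal[OF sym L x(1) y, of k] unfolding norm[symmetric] a_def B_def by blast
  have a'_eq: "a' = c1 * a - B^2 / a"
    using qf_proj[OF sym x(2), of y] c1(1) unfolding a_def a'_def B_def by simp
  have B_eq: "B = c2 * a / 2"
    using c2(1) two_nonzero by (simp add: field_simps)
  have a'_factor: "a' = a * (c1 - (c2 / 2)^2)"
    unfolding a'_eq B_eq using a two_nonzero by (simp add: field_simps power2_eq_square)
  have "val_ge (inverse 2) (- ord 2)"
    using val_ge_ord[of "inverse (2::'a)"] unfolding ord_inverse[OF two_nonzero] .
  with c2(2) have "val_ge (c2 * inverse 2) (0 + - ord 2)"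
    unfolding valring_iff_val_ge by (rule val_ge_mult)
  then have half: "val_ge (c2 / 2) (- ord 2)"
    by (simp only: divide_inverse add_0_left)
  have "val_ge ((c2 / 2)^2) (- ord 2 + - ord 2)"
    unfolding power2_eq_square by (rule val_ge_mult[OF half half])
  moreover have "val_ge c1 (- 2 * ord 2)"
    using c1(2) ord_two_pos val_ge_mono[of c1 0] by (simp add: valring_iff_val_ge)
  ultimately have "val_ge (c1 - (c2 / 2)^2) (- 2 * ord 2)"
    by (simp add: val_ge_diff)
  then have "val_ge a' (ord a + - 2 * ord 2)"
    unfolding a'_factor by (rule val_ge_mult[OF val_ge_ord])
  with a' show "ord (qf G k x) - 2 * ord 2 \<le> ord (qf G k (proj G k x y))"
    by (simp add: val_ge_def a_def a'_def)
  have defect: "- (a * a') - B^2 = - (a^2 * c1)"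
    using a'_eq a by (simp add: field_simps power2_eq_square)
  have "ereal (real_of_int (ord a - ord a')) \<le> qd ord (- (a * a'))"
  proof (cases "c1 = 0")
    case True
    then show ?thesis
      using defect qd_square[of B] by simp
  next
    case False
    with c1(2) have "0 \<le> ord c1" by (simp add: valring_def)
    moreover have "ord (- (a^2 * c1)) = 2 * ord a + ord c1" "ord (- (a * a')) = ord a + ord a'"
      using a a' False by (simp_all add: ord_minus ord_mult power2_eq_square)
    ultimately have "ereal (real_of_int (ord a - ord a'))
        \<le> ereal (real_of_int (ord (- (a * a') - B^2) - ord (- (a * a'))))"
      unfolding defect by simp
    also have "\<dots> \<le> qd ord (- (a * a'))"
      using qd_ge_ord_diff_square[of "- (a * a')" B] defect a False by simp
    finally show ?thesis .
  qed
  then show "ereal (real_of_int (ord (qf G k x) - ord (qf G k (proj G k x y))))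
      \<le> qd ord (- (qf G k x * qf G k (proj G k x y)))"
    by (simp add: a_def a'_def)
qed

lemma lattice_add_closed: "is_lattice ord k L \<Longrightarrow> add_closed L"
proof -
  assume "is_lattice ord k L"
  then obtain r and e :: "nat \<Rightarrow> nat \<Rightarrow> 'a"
    where L: "L = {(\<lambda>t. \<Sum>i<r. c i * e i t) | c. \<forall>i<r. c i \<in> valring ord}"
    unfolding is_lattice_def by auto
  have "(\<lambda>t. (\<Sum>i<r. c i * e i t) + (\<Sum>i<r. c' i * e i t)) \<in> L"
    if "\<forall>i<r. c i \<in> valring ord" "\<forall>i<r. c' i \<in> valring ord" for c c'
  proof -
    have "(\<lambda>t. (\<Sum>i<r. c i * e i t) + (\<Sum>i<r. c' i * e i t)) = (\<lambda>t. \<Sum>i<r. (c i + c' i) * e i t)"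
      by (simp add: algebra_simps sum.distrib)
    moreover have "\<forall>i<r. c i + c' i \<in> valring ord"
      using that by (simp add: valring_iff_val_ge val_ge_add)
    ultimately show ?thesis
      unfolding L mem_Collect_eq by (intro exI[of _ "\<lambda>i. c i + c' i"]) simp
  qed
  then show "add_closed L"
    unfolding add_closed_def L by blast
qed

lemma is_BONG_consecutive:
  assumes sym: "\<forall>i i'. G i i' = G i' i"
  shows "is_BONG ord G k L xs \<Longrightarrow> add_closed L \<Longrightarrow> Suc i < length xs \<Longrightarrow>
    ord (qf G k (xs ! i)) - 2 * ord 2 \<le> ord (qf G k (xs ! Suc i)) \<and>
    ereal (real_of_int (ord (qf G k (xs ! i)) - ord (qf G k (xs ! Suc i))))
      \<le> qd ord (- (qf G k (xs ! i) * qf G k (xs ! Suc i)))"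
proof (induction xs arbitrary: L i)
  case Nil
  then show ?case by simp
next
  case (Cons x xs)
  then have x: "x \<in> L" "qf G k x \<noteq> 0"
    and norm: "{c * qf G k x | c. c \<in> valring ord} = normideal ord G k L"
    and tail: "is_BONG ord G k (proj G k x ` L) xs"
    by auto
  show ?case
  proof (cases i)
    case 0
    with Cons.prems(3) obtain x' xs' where xs: "xs = x' # xs'"
      by (cases xs) auto
    with tail obtain y where "y \<in> L" "x' = proj G k x y" "qf G k x' \<noteq> 0"
      by auto
    with proj_qf_bounds[OF sym Cons.prems(2) x norm] show ?thesis
      using 0 xs by simp
  next
    case (Suc i')
    with Cons.IH[OF tail add_closed_proj_image[OF Cons.prems(2)]] Cons.prems(3)
    show ?thesis by simp
  qed
qed

end

lemma is_BONG_qf_nonzero: "is_BONG ord G k L xs \<Longrightarrow> i < length xs \<Longrightarrow> qf G k (xs ! i) \<noteq> 0"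
proof (induction xs arbitrary: L i)
  case (Cons x xs)
  then show ?case by (cases i) auto
qed simp

definition good_BONG_seq :: "('a::field \<Rightarrow> int) \<Rightarrow> (nat \<Rightarrow> 'a) \<Rightarrow> nat \<Rightarrow> bool" where
  "good_BONG_seq ord a m \<longleftrightarrow>
     (\<forall>i. 1 \<le> i \<longrightarrow> i \<le> m \<longrightarrow> a i \<noteq> 0) \<and>
     (\<forall>i. 1 \<le> i \<longrightarrow> i + 1 \<le> m \<longrightarrow> ord (a i) - 2 * ord 2 \<le> ord (a (i + 1))) \<and>
     (\<forall>i. 1 \<le> i \<longrightarrow> i + 1 \<le> m \<longrightarrow>
        ereal (real_of_int (ord (a i) - ord (a (i + 1)))) \<le> qd ord (- (a i * a (i + 1)))) \<and>
     (\<forall>i. 1 \<le> i \<longrightarrow> i + 2 \<le> m \<longrightarrow> ord (a i) \<le> ord (a (i + 2)))"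

lemma (in dyadic_valuation) good_BONG_lattice_seq:
  assumes sym: "\<forall>i i'. G i i' = G i' i" and "good_BONG_lattice ord G k L a m"
  shows "good_BONG_seq ord a m"
proof -
  obtain xs where lat: "is_lattice ord k L" and bong: "is_BONG ord G k L xs"
    and len: "length xs = m" and norms: "\<And>i. 1 \<le> i \<Longrightarrow> i \<le> m \<Longrightarrow> qf G k (xs ! (i - 1)) = a i"
    and good: "\<And>i. 1 \<le> i \<Longrightarrow> i + 2 \<le> m \<Longrightarrow> ord (a i) \<le> ord (a (i + 2))"
    using assms(2) unfolding good_BONG_lattice_def by blast
  have "a i \<noteq> 0" if "1 \<le> i" "i \<le> m" for i
    using is_BONG_qf_nonzero[OF bong, of "i - 1"] norms[OF that] that len by simp
  moreover have "ord (a i) - 2 * ord 2 \<le> ord (a (i + 1)) \<and>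
      ereal (real_of_int (ord (a i) - ord (a (i + 1)))) \<le> qd ord (- (a i * a (i + 1)))"
    if "1 \<le> i" "i + 1 \<le> m" for i
    using is_BONG_consecutive[OF sym bong lattice_add_closed[OF lat], of "i - 1"]
      norms[of i] norms[of "i + 1"] that len by simp
  ultimately show ?thesis
    unfolding good_BONG_seq_def using good by blast
qed

lemma integral_good_BONG_lattice_ord_first:
  assumes "good_BONG_lattice ord G k L a m" "integral_lattice ord G k L" "1 \<le> m"
  shows "0 \<le> ord (a 1)"
proof -
  obtain xs where bong: "is_BONG ord G k L xs" and len: "length xs = m"
    and "qf G k (xs ! 0) = a 1"
    using assms(1,3) unfolding good_BONG_lattice_def by fastforce
  moreover obtain x xs' where "xs = x # xs'"
    using len assms(3) by (cases xs) auto
  ultimately have "a 1 \<in> valring ord" "a 1 \<noteq> 0"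
    using assms(2) is_BONG_qf_nonzero[OF bong, of 0] unfolding integral_lattice_def by auto
  then show ?thesis
    by (simp add: valring_def)
qed

lemma good_BONG_seq_ord_mono_even:
  assumes "good_BONG_seq ord a m" "1 \<le> i" "i \<le> i'" "i' \<le> m" "even (i' - i)"
  shows "ord (a i) \<le> ord (a i')"
proof -
  have "ord (a i) \<le> ord (a (i + 2 * s))" if "i + 2 * s \<le> m" for s
    using that
  proof (induction s)
    case (Suc s)
    then have "ord (a i) \<le> ord (a (i + 2 * s))" by simp
    also have "\<dots> \<le> ord (a (i + 2 * s + 2))"
      using assms(1,2) Suc.prems unfolding good_BONG_seq_def by simp
    finally show ?case by (simp add: add.assoc)
  qed simp
  moreover obtain s where "i' = i + 2 * s"
    using assms(3,5) by (metis evenE le_add_diff_inverse)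
  ultimately show ?thesis
    using assms(4) by simp
qed

lemma good_BONG_seq_odd_ord_nonneg:
  assumes "good_BONG_seq ord a m" "0 \<le> ord (a 1)" "odd t" "t \<le> m"
  shows "0 \<le> ord (a t)"
  using good_BONG_seq_ord_mono_even[OF assms(1), of 1 t] assms odd_pos[OF assms(3)] by simp

lemma good_BONG_seq_even_ord_ge:
  assumes "good_BONG_seq ord a m" "0 \<le> ord (a 1)" "even j" "2 \<le> j" "j \<le> m"
  shows "- 2 * ord 2 \<le> ord (a j)"
proof -
  have "ord (a 1) - 2 * ord 2 \<le> ord (a 2)"
    using assms(1,4,5) unfolding good_BONG_seq_def by (simp add: numeral_2_eq_2)
  also have "\<dots> \<le> ord (a j)"
    using good_BONG_seq_ord_mono_even[OF assms(1), of 2 j] assms(3-5) by simp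
  finally show ?thesis
    using assms(2) by simp
qed

section \<open>The invariants \<open>\<alpha>\<^sub>i\<close> and \<open>d[\<dots>]\<close>\<close>

lemma alpha_eq_Min_image:
  "alpha ord a m i = Min ({ereal ((real_of_int (ord (a (i+1))) - real_of_int (ord (a i))) / 2 + real_of_int (ord 2))}
      \<union> (\<lambda>j. ereal (real_of_int (ord (a (i+1)) - ord (a j))) + qd ord (- (a j * a (j+1)))) ` {1..i}
      \<union> (\<lambda>j. ereal (real_of_int (ord (a (j+1)) - ord (a i))) + qd ord (- (a j * a (j+1)))) ` {i..m-1})"
  unfolding alpha_def by (rule arg_cong[where f = Min]) auto

lemma alpha_le_left:
  "1 \<le> t \<Longrightarrow> t \<le> i \<Longrightarrow>
    alpha ord a m i \<le> ereal (real_of_int (ord (a (i+1)) - ord (a t))) + qd ord (- (a t * a (t+1)))"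
  unfolding alpha_eq_Min_image by (rule Min_le) auto

lemma alpha_le_right:
  "i \<le> t \<Longrightarrow> t \<le> m - 1 \<Longrightarrow>
    alpha ord a m i \<le> ereal (real_of_int (ord (a (t+1)) - ord (a i))) + qd ord (- (a t * a (t+1)))"
  unfolding alpha_eq_Min_image by (rule Min_le) auto

lemma alpha_geI:
  assumes "X \<le> ereal ((real_of_int (ord (a (i+1))) - real_of_int (ord (a i))) / 2 + real_of_int (ord 2))"
    and "\<And>t. 1 \<le> t \<Longrightarrow> t \<le> i \<Longrightarrow>
      X \<le> ereal (real_of_int (ord (a (i+1)) - ord (a t))) + qd ord (- (a t * a (t+1)))"
    and "\<And>t. i \<le> t \<Longrightarrow> t \<le> m - 1 \<Longrightarrow>
      X \<le> ereal (real_of_int (ord (a (t+1)) - ord (a i))) + qd ord (- (a t * a (t+1)))"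
  shows "X \<le> alpha ord a m i"
  unfolding alpha_eq_Min_image using assms by (subst Min_ge_iff) auto

lemma ereal_le_add_ereal: "ereal c \<le> q \<Longrightarrow> r \<le> x + c \<Longrightarrow> ereal r \<le> ereal x + q"
  by (cases q) auto

lemma ereal_le_add_trans:
  "D \<le> ereal v + p \<Longrightarrow> p \<le> ereal u + q \<Longrightarrow> v + u \<le> w \<Longrightarrow> D \<le> ereal w + (q::ereal)"
  by (cases q; cases p; cases D) auto

lemma qd_pair_ge_at_jump:
  assumes "good_BONG_seq ord a m" "0 \<le> ord (a 1)" "even j" "j \<le> m" "ord (a j) = - 2 * ord 2"
    and "odd t" "t + 1 \<le> j"
  shows "ereal (real_of_int (2 * ord 2)) \<le> qd ord (- (a t * a (t + 1)))"
proof -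
  have "0 \<le> ord (a t)"
    using good_BONG_seq_odd_ord_nonneg[OF assms(1,2,6)] assms(4,7) by simp
  moreover have "ord (a (t + 1)) \<le> ord (a j)"
    using good_BONG_seq_ord_mono_even[OF assms(1), of "t + 1" j] assms(3,4,6,7) by simp
  ultimately have "ereal (real_of_int (2 * ord 2)) \<le> ereal (real_of_int (ord (a t) - ord (a (t + 1))))"
    using assms(5) by simp
  also have "\<dots> \<le> qd ord (- (a t * a (t + 1)))"
    using assms(1,4,6,7) odd_pos[OF assms(6)] unfolding good_BONG_seq_def by simp
  finally show ?thesis .
qed

context dyadic_valuation
begin

text \<open>At a jump \<open>R\<^sub>j = -2e\<close>, \<open>R\<^sub>j\<^sub>+\<^sub>1 = 0\<close> every term of \<open>\<alpha>\<^sub>j\<close> is at least \<open>2e\<close>: odd-indexed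
  \<open>R\<^sub>t\<close> are \<open>\<ge> 0\<close> and even-indexed \<open>R\<^sub>t\<close> with \<open>t \<le> j\<close> are \<open>\<le> -2e\<close>, and the defect
  \<open>d(-a\<^sub>ta\<^sub>t\<^sub>+\<^sub>1) \<ge> R\<^sub>t - R\<^sub>t\<^sub>+\<^sub>1\<close> covers the remaining terms.\<close>

lemma alpha_ge_at_jump:
  assumes a: "good_BONG_seq ord a m" and a1: "0 \<le> ord (a 1)"
    and j: "even j" "1 \<le> j" "j + 1 \<le> m"
    and jump: "ord (a j) = - 2 * ord 2" "ord (a (j + 1)) = 0"
  shows "ereal (real_of_int (2 * ord 2)) \<le> alpha ord a m j"
proof -
  have defect: "ereal (real_of_int (ord (a t) - ord (a (t + 1)))) \<le> qd ord (- (a t * a (t + 1)))"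
    if "1 \<le> t" "t + 1 \<le> m" for t
    using a that unfolding good_BONG_seq_def by simp
  show ?thesis
  proof (rule alpha_geI)
    show "ereal (real_of_int (2 * ord 2))
        \<le> ereal ((real_of_int (ord (a (j+1))) - real_of_int (ord (a j))) / 2 + real_of_int (ord 2))"
      using jump by simp
    fix t
    assume t: "1 \<le> t" "t \<le> j"
    show "ereal (real_of_int (2 * ord 2))
        \<le> ereal (real_of_int (ord (a (j+1)) - ord (a t))) + qd ord (- (a t * a (t+1)))"
    proof (cases "even t")
      case True
      then have "ord (a t) \<le> ord (a j)"
        using good_BONG_seq_ord_mono_even[OF a t(1,2)] j by simp
      then show ?thesis
        using ereal_le_add_ereal[OF qd_nonneg[unfolded zero_ereal_def]] jump by simp
    next
      case False
      with t j(1) have "t + 1 \<le> j"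
        by (cases "t = j") auto
      then have "ord (a (t + 1)) \<le> ord (a j)"
        using good_BONG_seq_ord_mono_even[OF a, of "t + 1" j] j False by simp
      then show ?thesis
        using ereal_le_add_ereal[OF defect] t j jump by simp
    qed
  next
    fix t
    assume t: "j \<le> t" "t \<le> m - 1"
    then have "0 \<le> ord (a (t + 1))" if "even t"
      using good_BONG_seq_odd_ord_nonneg[OF a a1] that j by simp
    moreover have "0 \<le> ord (a t)" if "odd t"
      using good_BONG_seq_odd_ord_nonneg[OF a a1] that t j by simp
    ultimately show "ereal (real_of_int (2 * ord 2))
        \<le> ereal (real_of_int (ord (a (t+1)) - ord (a j))) + qd ord (- (a t * a (t+1)))"
      using ereal_le_add_ereal[OF qd_nonneg[unfolded zero_ereal_def]]
        ereal_le_add_ereal[OF defect] t j jump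
      by (cases "even t") auto
  qed
qed

end

text \<open>A lower bound \<open>D \<le> \<alpha>\<^sub>i - R\<^sub>i\<^sub>+\<^sub>1\<close> propagates to \<open>\<alpha>\<^sub>i\<^sub>+\<^sub>1\<close> when the neighbours
  \<open>R\<^sub>i, R\<^sub>i\<^sub>+\<^sub>2\<close> are integral: each term of \<open>\<alpha>\<^sub>i\<^sub>+\<^sub>1\<close> dominates a term of \<open>\<alpha>\<^sub>i\<close> shifted by \<open>-R\<^sub>i\<^sub>+\<^sub>1\<close>.\<close>

lemma alpha_ge_of_alpha_prev:
  assumes "1 \<le> i" "i + 2 \<le> m" "0 \<le> ord (a i)" "0 \<le> ord (a (i + 2))"
    and half: "D \<le> ereal (- real_of_int (ord (a (i + 1))) / 2 + real_of_int (ord 2))"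
    and prev: "D \<le> ereal (real_of_int (- ord (a (i + 1)))) + alpha ord a m i"
  shows "D \<le> alpha ord a m (i + 1)"
proof (rule alpha_geI)
  have "ereal (- real_of_int (ord (a (i + 1))) / 2 + real_of_int (ord 2))
      \<le> ereal ((real_of_int (ord (a (i+1+1))) - real_of_int (ord (a (i+1)))) / 2 + real_of_int (ord 2))"
    using assms(4) by (simp add: divide_right_mono)
  with half show "D \<le> ereal ((real_of_int (ord (a (i+1+1))) - real_of_int (ord (a (i+1)))) / 2 + real_of_int (ord 2))"
    by (rule order_trans)
next
  fix t
  assume t: "1 \<le> t" "t \<le> i + 1"
  show "D \<le> ereal (real_of_int (ord (a (i+1+1)) - ord (a t))) + qd ord (- (a t * a (t+1)))"
  proof (cases "t \<le> i")
    case True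
    show ?thesis
      by (rule ereal_le_add_trans[OF prev alpha_le_left[OF t(1) True]]) (use assms(4) in simp)
  next
    case False
    with t have "t = i + 1" by simp
    moreover have "alpha ord a m i
        \<le> ereal (real_of_int (ord (a (i + 2)) - ord (a i))) + qd ord (- (a (i + 1) * a (i + 2)))"
      using alpha_le_right[of i "i + 1" m ord a] assms(2) by (simp add: numeral_2_eq_2)
    ultimately show ?thesis
      by (auto intro: ereal_le_add_trans[OF prev] simp: assms(3) numeral_2_eq_2)
  qed
next
  fix t
  assume t: "i + 1 \<le> t" "t \<le> m - 1"
  show "D \<le> ereal (real_of_int (ord (a (t+1)) - ord (a (i+1)))) + qd ord (- (a t * a (t+1)))"
    by (rule ereal_le_add_trans[OF prev alpha_le_right]) (use t assms(3) in simp_all)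
qed

lemma qd_pair_ge_of_alpha:
  assumes "1 \<le> t" "t \<le> i" "0 \<le> ord (a t)"
    and "D \<le> ereal (real_of_int (- ord (a (i + 1)))) + alpha ord a m i"
  shows "D \<le> qd ord (- (a t * a (t + 1)))"
  using ereal_le_add_trans[OF assms(4) alpha_le_left[OF assms(1,2)], of 0] assms(3) by simp

lemma prodr_Suc: "i \<le> Suc j \<Longrightarrow> prodr c i (Suc j) = prodr c i j * c (Suc j)"
  unfolding prodr_def by (simp add: prod.cl_ivl_Suc)

lemma prodr_nonzero: "(\<And>i. 1 \<le> i \<Longrightarrow> i \<le> j \<Longrightarrow> c i \<noteq> 0) \<Longrightarrow> prodr c 1 j \<noteq> (0::'a::field)"
  unfolding prodr_def by auto

lemma (in dyadic_valuation) qd_prodr_pairs_ge: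
  assumes "\<And>i. 1 \<le> i \<Longrightarrow> i \<le> 2 * s \<Longrightarrow> c i \<noteq> 0"
    and "\<And>t. odd t \<Longrightarrow> t < 2 * s \<Longrightarrow> D \<le> qd ord (c t * c (t + 1))"
  shows "D \<le> qd ord (prodr c 1 (2 * s))"
  using assms
proof (induction s)
  case 0
  have "prodr c 1 0 = 1\<^sup>2"
    by (simp add: prodr_def)
  then show ?case
    using qd_square[of 1] by simp
next
  case (Suc s)
  have "D \<le> qd ord (prodr c 1 (2 * s) * (c (2 * s + 1) * c (2 * s + 1 + 1)))"
  proof (rule qd_mult_ge)
    show "prodr c 1 (2 * s) \<noteq> 0" "c (2 * s + 1) * c (2 * s + 1 + 1) \<noteq> 0"
      using Suc.prems(1) prodr_nonzero[of "2 * s" c] by auto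
    show "D \<le> qd ord (prodr c 1 (2 * s))"
      using Suc by simp
    show "D \<le> qd ord (c (2 * s + 1) * c (2 * s + 1 + 1))"
      using Suc.prems(2) by simp
  qed
  then show ?case
    by (simp add: prodr_Suc mult.assoc)
qed

lemma (in dyadic_valuation) qd_prodr_ge_at_jump:
  assumes a: "good_BONG_seq ord a m" "0 \<le> ord (a 1)"
    and b: "good_BONG_seq ord b n" "0 \<le> ord (b 1)"
    and i: "odd i" "i + 1 \<le> m" "i + 1 \<le> n" and jump: "ord (a (i + 1)) = - 2 * ord 2"
    and D_le_2e: "D \<le> ereal (real_of_int (2 * ord 2))"
    and D_prev: "D \<le> ereal (real_of_int (- ord (b (i + 1)))) + alpha ord b n i"
  shows "D \<le> qd ord (prodr a 1 (i + 1) * prodr b 1 (i + 1))"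
proof -
  have "D \<le> qd ord ((- (a t * a (t + 1))) * (- (b t * b (t + 1))))" if t: "odd t" "t < i + 1" for t
  proof (rule qd_mult_ge)
    show "- (a t * a (t + 1)) \<noteq> 0" "- (b t * b (t + 1)) \<noteq> 0"
      using a(1) b(1) t i odd_pos[OF t(1)] unfolding good_BONG_seq_def by auto
    show "D \<le> qd ord (- (a t * a (t + 1)))"
      using D_le_2e qd_pair_ge_at_jump[OF a _ _ jump t(1)] t i by (auto elim: order_trans)
    show "D \<le> qd ord (- (b t * b (t + 1)))"
      using qd_pair_ge_of_alpha[OF _ _ _ D_prev] good_BONG_seq_odd_ord_nonneg[OF b t(1)]
        t i odd_pos[OF t(1)] by simp
  qed
  then have "D \<le> qd ord (prodr (\<lambda>t. a t * b t) 1 (2 * ((i + 1) div 2)))"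
    using a(1) b(1) i unfolding good_BONG_seq_def
    by (intro qd_prodr_pairs_ge) (auto simp: mult_ac)
  then show ?thesis
    using i(1) by (simp add: prodr_def prod.distrib)
qed

lemma dbr_geI:
  assumes "D \<le> qd ord (c * prodr a 1 i * prodr b 1 j)"
    and "i \<noteq> 0 \<Longrightarrow> i \<noteq> m \<Longrightarrow> D \<le> alpha ord a m i"
    and "j \<noteq> 0 \<Longrightarrow> j \<noteq> n \<Longrightarrow> D \<le> alpha ord b n j"
  shows "D \<le> dbr ord a m b n c i j"
  unfolding dbr_def using assms by auto

lemma Acoef_le_half:
  "Acoef ord a m b n i \<le> ereal (real_of_int (ord (a (i+1)) - ord (b i)) / 2 + real_of_int (ord 2))"
  unfolding Acoef_def by simp

lemma Acoef_le_alpha_prev: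
  assumes "1 \<le> i" "i + 1 \<le> n"
  shows "Acoef ord a m b n (i + 1)
    \<le> ereal (real_of_int (ord (a (i + 2)) - ord (b (i + 1)))) + alpha ord b n i"
proof -
  have "dbr ord a m b n (- 1) (i + 2) i \<le> alpha ord b n i"
    using assms unfolding dbr_def by (intro min.coboundedI2) simp
  then show ?thesis
    unfolding Acoef_def by (intro min.coboundedI2 min.coboundedI1) (simp add: add_left_mono numeral_2_eq_2)
qed

theorem lemma2p9:
  fixes ord :: "'a::field \<Rightarrow> int"
    and G H :: "nat \<Rightarrow> nat \<Rightarrow> 'a" and k l m n j :: nat
    and M N :: "(nat \<Rightarrow> 'a) set" and a b :: "nat \<Rightarrow> 'a"
  assumes "dyadic_local_field ord"
    and "\<forall>i i'. G i i' = G i' i" and "\<forall>i i'. H i i' = H i' i"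
    and "good_BONG_lattice ord G k M a m" and "integral_lattice ord G k M"
    and "good_BONG_lattice ord H l N b n" and "integral_lattice ord H l N"
    and "n \<le> m"
    and "1 \<le> j" and "j \<le> min (m - 1) n" and "even j"
    and "ord (a j) = - 2 * ord 2" and "ord (a (j + 1)) = 0"
  shows "dbr ord a m b n 1 j j \<ge> Acoef ord a m b n j"
proof -
  interpret dyadic_valuation ord
    using assms(1) by (rule dyadic_local_field_dyadic_valuation)
  have a: "good_BONG_seq ord a m" and b: "good_BONG_seq ord b n"
    using good_BONG_lattice_seq[OF assms(2,4)] good_BONG_lattice_seq[OF assms(3,6)] .
  define i where "i = j - 1"
  have "j \<noteq> 1"
    using assms(11) by auto
  then have i: "j = i + 1" "1 \<le> i" "odd i"
    using assms(9,11) by (auto simp: i_def)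
  have j: "i + 2 \<le> m" "i + 1 \<le> n"
    using assms(10) i(1,2) by auto
  have a1: "0 \<le> ord (a 1)" and b1: "0 \<le> ord (b 1)"
    using integral_good_BONG_lattice_ord_first[OF assms(4,5)]
      integral_good_BONG_lattice_ord_first[OF assms(6,7)] j by auto
  define D where "D = Acoef ord a m b n j"
  have "- 2 * ord 2 \<le> ord (b j)"
    using good_BONG_seq_even_ord_ge[OF b b1 assms(11)] i j by simp
  then have D_le_2e: "D \<le> ereal (real_of_int (2 * ord 2))"
    using Acoef_le_half[of ord a m b n j] assms(13) unfolding D_def by (auto elim: order_trans)
  have D_prev: "D \<le> ereal (real_of_int (- ord (b (i + 1)))) + alpha ord b n i"
    using Acoef_le_alpha_prev[OF i(2) j(2), of ord a m] assms(13) i(1) unfolding D_def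
    by (simp add: numeral_2_eq_2)
  show ?thesis
    unfolding D_def[symmetric]
  proof (rule dbr_geI)
    show "D \<le> alpha ord a m j"
      using D_le_2e alpha_ge_at_jump[OF a a1 assms(11,9)] assms(12,13) j i(1) by (auto elim: order_trans)
    show "D \<le> alpha ord b n j" if "j \<noteq> n"
      using alpha_ge_of_alpha_prev[OF i(2) _ _ _ _ D_prev] Acoef_le_half[of ord a m b n j]
        good_BONG_seq_odd_ord_nonneg[OF b b1] that assms(13) i j unfolding D_def by auto
    show "D \<le> qd ord (1 * prodr a 1 j * prodr b 1 j)"
      using qd_prodr_ge_at_jump[OF a a1 b b1 _ _ _ _ D_le_2e D_prev] assms(12) i j by simp
  qed
qed

end
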